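(* Let $\mathcal{H}$ be a complex Hilbert space and $T\in\mathbb{B}(\mathcal{H})$ with Cartesian decomposition $T=T_1+iT_2$, $T_1=\frac{T+T^*}{2}$, $T_2=\frac{T-T^*}{2i}$. Then the quantity $2\omega^2(T)-\max(\alpha(T),\alpha(T^* ))+D(T)$ is nonnegative and \[ \|T\|\le \sqrt{2\,\omega^2(T)-\max\big(\alpha(T),\alpha(T^* )\big)+D(T)}\le 2\,\omega(T). \]
   Context: $\mathbb{B}(\mathcal{H})$ denotes the bounded linear operators on $\mathcal{H}$. For $T\in\mathbb{B}(\mathcal{H})$: $\omega(T)=\sup\{|\langle Tx,x\rangle| : \|x\|=1\}$ (numerical radius); $\|T\|$ is the operator norm; $\alpha(T)=\inf_{\|x\|=1}\|Tx\|^2$; $D(T)=2\min(\|T_1\|^2,\|T_2\|^2)$ where $T_1=\frac{T+T^*}{2}$, $T_2=\frac{T-T^*}{2i}$. *)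

theory Defs
  imports "HOL-Analysis.Analysis"
begin

text \<open>Complex inner product spaces (not in the distribution): a real normed vector
space with a compatible complex scalar multiplication and a complex inner product,
linear in the first and conjugate-linear in the second argument, inducing the norm.\<close>

class complex_inner = real_normed_vector +
  fixes scaleC :: "complex \<Rightarrow> 'a \<Rightarrow> 'a" (infixr \<open>*\<^sub>C\<close> 75)
    and cinner :: "'a \<Rightarrow> 'a \<Rightarrow> complex"
  assumes scaleC_add_right: "a *\<^sub>C (x + y) = a *\<^sub>C x + a *\<^sub>C y"
    and scaleC_add_left: "(a + b) *\<^sub>C x = a *\<^sub>C x + b *\<^sub>C x"
    and scaleC_scaleC: "a *\<^sub>C (b *\<^sub>C x) = (a * b) *\<^sub>C x"
    and scaleC_one: "1 *\<^sub>C x = x"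
    and scaleR_scaleC: "scaleR r x = complex_of_real r *\<^sub>C x"
    and cinner_commute: "cinner x y = cnj (cinner y x)"
    and cinner_add_left: "cinner (x + y) z = cinner x z + cinner y z"
    and cinner_scaleC_left: "cinner (a *\<^sub>C x) y = a * cinner x y"
    and cinner_self_Im: "Im (cinner x x) = 0"
    and cinner_self_nonneg: "0 \<le> Re (cinner x x)"
    and cinner_self_eq_zero: "cinner x x = 0 \<longleftrightarrow> x = 0"
    and norm_eq_sqrt_cinner: "norm x = sqrt (Re (cinner x x))"

class chilbert_space = complex_inner + complete_space

definition bounded_clinear_op :: "('a::complex_inner \<Rightarrow> 'a) \<Rightarrow> bool" where
  "bounded_clinear_op T \<longleftrightarrow>
     (\<forall>x y. T (x + y) = T x + T y) \<and> (\<forall>c x. T (c *\<^sub>C x) = c *\<^sub>C T x) \<and>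
     (\<exists>K. \<forall>x. norm (T x) \<le> norm x * K)"

definition is_adjoint :: "('a::complex_inner \<Rightarrow> 'a) \<Rightarrow> ('a \<Rightarrow> 'a) \<Rightarrow> bool" where
  "is_adjoint S T \<longleftrightarrow> (\<forall>x y. cinner (T x) y = cinner x (S y))"

definition numrad :: "('a::complex_inner \<Rightarrow> 'a) \<Rightarrow> real" where
  "numrad T = Sup {cmod (cinner (T x) x) | x. norm x = 1}"

definition alphaop :: "('a::complex_inner \<Rightarrow> 'a) \<Rightarrow> real" where
  "alphaop T = Inf {(norm (T x))\<^sup>2 | x. norm x = 1}"

definition re_part :: "('a::complex_inner \<Rightarrow> 'a) \<Rightarrow> ('a \<Rightarrow> 'a) \<Rightarrow> ('a \<Rightarrow> 'a)" where
  "re_part T Tadj = (\<lambda>x. (1/2) *\<^sub>C (T x + Tadj x))"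

definition im_part :: "('a::complex_inner \<Rightarrow> 'a) \<Rightarrow> ('a \<Rightarrow> 'a) \<Rightarrow> ('a \<Rightarrow> 'a)" where
  "im_part T Tadj = (\<lambda>x. (1 / (2 * \<i>)) *\<^sub>C (T x - Tadj x))"

definition Dop :: "('a::complex_inner \<Rightarrow> 'a) \<Rightarrow> ('a \<Rightarrow> 'a) \<Rightarrow> real" where
  "Dop T Tadj = 2 * min ((onorm (re_part T Tadj))\<^sup>2) ((onorm (im_part T Tadj))\<^sup>2)"

end

theory Submission
  imports Defs
begin

text \<open>Since \<open>T x = T\<^sub>1 x + i T\<^sub>2 x\<close> and \<open>T\<^sup>* x = T\<^sub>1 x - i T\<^sub>2 x\<close>, the parallelogram law gives
\<open>\<parallel>T x\<parallel>\<^sup>2 + \<parallel>T\<^sup>* x\<parallel>\<^sup>2 = 2 (\<parallel>T\<^sub>1 x\<parallel>\<^sup>2 + \<parallel>T\<^sub>2 x\<parallel>\<^sup>2)\<close>. The parts \<open>T\<^sub>1, T\<^sub>2\<close> are self-adjoint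
with quadratic forms \<open>Re \<langle>T x, x\<rangle>\<close> and \<open>Im \<langle>T x, x\<rangle>\<close>, so by polarization their norms are at
most \<open>\<omega>(T)\<close>. Bounding one of the two squares by \<open>\<omega>\<^sup>2\<close> and the other by
\<open>min (\<parallel>T\<^sub>1\<parallel>\<^sup>2, \<parallel>T\<^sub>2\<parallel>\<^sup>2)\<close> yields \<open>\<parallel>T x\<parallel>\<^sup>2 + \<parallel>T\<^sup>* x\<parallel>\<^sup>2 \<le> 2\<omega>\<^sup>2 + D(T)\<close> for unit \<open>x\<close>.
Subtracting \<open>\<alpha>(T\<^sup>*)\<close> bounds \<open>\<parallel>T x\<parallel>\<^sup>2\<close>; subtracting \<open>\<alpha>(T)\<close> bounds \<open>\<parallel>T\<^sup>*\<parallel>\<^sup>2\<close>, which dominates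
\<open>\<parallel>T\<parallel>\<^sup>2\<close> because \<open>\<parallel>T x\<parallel>\<^sup>2 = \<langle>x, T\<^sup>* T x\<rangle>\<close>. The upper bound \<open>2\<omega>(T)\<close> follows from
\<open>D(T) \<le> 2\<omega>\<^sup>2\<close> and \<open>\<alpha> \<ge> 0\<close>.\<close>

lemma scaleC_of_real: "complex_of_real r *\<^sub>C (x::'a::complex_inner) = r *\<^sub>R x"
  by (simp add: scaleR_scaleC)

lemma scaleC_scaleR_commute: "a *\<^sub>C (r *\<^sub>R (x::'a::complex_inner)) = r *\<^sub>R (a *\<^sub>C x)"
  by (simp add: scaleR_scaleC scaleC_scaleC mult.commute)

lemma cinner_add_right: "cinner (x::'a::complex_inner) (y + z) = cinner x y + cinner x z"
  by (metis cinner_commute cinner_add_left complex_cnj_add)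

lemma cinner_scaleC_right: "cinner (x::'a::complex_inner) (a *\<^sub>C y) = cnj a * cinner x y"
  by (metis cinner_commute cinner_scaleC_left complex_cnj_mult)

lemma cinner_scaleR_left: "cinner (r *\<^sub>R x) (y::'a::complex_inner) = complex_of_real r * cinner x y"
  by (simp add: scaleR_scaleC cinner_scaleC_left)

lemma cinner_scaleR_right: "cinner y (r *\<^sub>R (x::'a::complex_inner)) = complex_of_real r * cinner y x"
  by (simp add: scaleR_scaleC cinner_scaleC_right)

lemma cinner_minus_left: "cinner (- x) (y::'a::complex_inner) = - cinner x y"
  using cinner_scaleR_left[of "-1" x y] by simp

lemma cinner_minus_right: "cinner y (- (x::'a::complex_inner)) = - cinner y x"
  using cinner_scaleR_right[of y "-1" x] by simp

lemma cinner_diff_left: "cinner (x - z) (y::'a::complex_inner) = cinner x y - cinner z y"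
  by (simp only: diff_conv_add_uminus cinner_add_left cinner_minus_left)

lemma cinner_diff_right: "cinner y (x - (z::'a::complex_inner)) = cinner y x - cinner y z"
  by (simp only: diff_conv_add_uminus cinner_add_right cinner_minus_right)

lemma cinner_zero_left [simp]: "cinner 0 (x::'a::complex_inner) = 0"
  using cinner_scaleR_left[of 0 0 x] by simp

lemma cinner_zero_right [simp]: "cinner (x::'a::complex_inner) 0 = 0"
  using cinner_scaleR_right[of x 0 0] by simp

lemma power2_norm_eq_cinner: "(norm (x::'a::complex_inner))\<^sup>2 = Re (cinner x x)"
  by (simp add: norm_eq_sqrt_cinner cinner_self_nonneg)

lemma cinner_self_eq_norm: "cinner (x::'a::complex_inner) x = complex_of_real ((norm x)\<^sup>2)"
  by (simp add: power2_norm_eq_cinner complex_eq_iff cinner_self_Im)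

lemma Re_cinner_commute: "Re (cinner (x::'a::complex_inner) y) = Re (cinner y x)"
  by (subst cinner_commute) simp

lemma norm_scaleC: "norm (c *\<^sub>C (x::'a::complex_inner)) = cmod c * norm x"
proof -
  have "(norm (c *\<^sub>C x))\<^sup>2 = Re (c * cnj c * cinner x x)"
    by (simp add: power2_norm_eq_cinner cinner_scaleC_left cinner_scaleC_right mult.assoc mult.left_commute)
  also have "\<dots> = (cmod c * norm x)\<^sup>2"
    by (simp add: cinner_self_eq_norm complex_mult_cnj power_mult_distrib cmod_power2 del: of_real_power)
  finally show ?thesis
    using power2_eq_imp_eq[of "norm (c *\<^sub>C x)" "cmod c * norm x"] by simp
qed

lemma cinner_eqI: "(\<And>z. cinner z a = cinner z b) \<Longrightarrow> a = (b::'a::complex_inner)"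
  by (metis cinner_diff_right cinner_self_eq_zero diff_self right_minus_eq)

lemma power2_norm_add:
  "(norm ((u::'a::complex_inner) + v))\<^sup>2 = (norm u)\<^sup>2 + (norm v)\<^sup>2 + 2 * Re (cinner u v)"
  by (simp add: power2_norm_eq_cinner cinner_add_left cinner_add_right Re_cinner_commute[of v u])

lemma power2_norm_diff:
  "(norm ((u::'a::complex_inner) - v))\<^sup>2 = (norm u)\<^sup>2 + (norm v)\<^sup>2 - 2 * Re (cinner u v)"
  by (simp add: power2_norm_eq_cinner cinner_diff_left cinner_diff_right Re_cinner_commute[of v u])

lemma Re_cinner_le_norm_mult: "Re (cinner (x::'a::complex_inner) y) \<le> norm x * norm y"
proof -
  let ?a = "norm y" and ?b = "norm x"
  have "0 \<le> (norm (?a *\<^sub>R x - ?b *\<^sub>R y))\<^sup>2" by simp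
  also have "\<dots> = (norm (?a *\<^sub>R x))\<^sup>2 + (norm (?b *\<^sub>R y))\<^sup>2 - 2 * Re (cinner (?a *\<^sub>R x) (?b *\<^sub>R y))"
    by (rule power2_norm_diff)
  also have "\<dots> = 2 * (?a * ?b) * (?a * ?b - Re (cinner x y))"
    by (simp add: cinner_scaleR_left cinner_scaleR_right power_mult_distrib
        algebra_simps power2_eq_square)
  finally have h: "0 \<le> 2 * (?a * ?b) * (?a * ?b - Re (cinner x y))" .
  show ?thesis
  proof (cases "x = 0 \<or> y = 0")
    case False
    then have "0 < 2 * (?a * ?b)" by simp
    with h show ?thesis by (simp add: zero_le_mult_iff mult.commute)
  qed auto
qed

lemma cmod_cinner_le_norm_mult: "cmod (cinner (x::'a::complex_inner) y) \<le> norm x * norm y"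
proof (cases "cinner x y = 0")
  case False
  define c where "c = cnj (cinner x y) / cmod (cinner x y)"
  have "c * cinner x y = cmod (cinner x y)"
    using False unfolding c_def
    by (simp add: field_simps, metis complex_norm_square of_real_mult power2_eq_square)
  then have "cmod (cinner x y) = Re (cinner (c *\<^sub>C x) y)"
    by (simp add: cinner_scaleC_left)
  also have "\<dots> \<le> norm x * norm y"
    using Re_cinner_le_norm_mult[of "c *\<^sub>C x" y] False by (simp add: norm_scaleC c_def norm_divide)
  finally show ?thesis .
qed simp

lemma bounded_clinear_op_imp_bounded_linear:
  assumes "bounded_clinear_op (T::'a::complex_inner \<Rightarrow> 'a)"
  shows "bounded_linear T"
proof -
  obtain K where "\<And>x. norm (T x) \<le> norm x * K"
    and "\<And>x y. T (x + y) = T x + T y" and "\<And>c x. T (c *\<^sub>C x) = c *\<^sub>C T x"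
    using assms by (auto simp: bounded_clinear_op_def)
  then show ?thesis
    by (intro bounded_linear_intro[where K=K]) (auto simp flip: scaleC_of_real)
qed

lemma is_adjoint_commute: "is_adjoint S T \<Longrightarrow> is_adjoint T (S::'a::complex_inner \<Rightarrow> 'a)"
  unfolding is_adjoint_def by (metis cinner_commute)

lemma is_adjoint_imp_linear:
  assumes "is_adjoint S (T::'a::complex_inner \<Rightarrow> 'a)"
  shows "linear S"
proof -
  have adj: "\<And>u v. cinner u (S v) = cinner (T u) v"
    using assms by (simp add: is_adjoint_def)
  show ?thesis
    by (rule linearI; rule cinner_eqI) (simp_all add: adj cinner_add_right cinner_scaleR_right)
qed

lemma linear_norm_le_of_unit:
  fixes f :: "'a::real_normed_vector \<Rightarrow> 'b::real_normed_vector"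
  assumes "linear f" and unit: "\<And>u. norm u = 1 \<Longrightarrow> norm (f u) \<le> c"
  shows "norm (f x) \<le> c * norm x"
proof (cases "x = 0")
  case True
  then show ?thesis using linear_0[OF assms(1)] by simp
next
  case False
  define u where "u = (1 / norm x) *\<^sub>R x"
  have "norm u = 1" and "x = norm x *\<^sub>R u"
    using False by (simp_all add: u_def)
  then have "norm (f x) = norm x * norm (f u)" and "norm (f u) \<le> c"
    using unit linear_scale[OF assms(1), of "norm x" u] by (metis norm_scaleR abs_norm_cancel)+
  then show ?thesis by (metis mult.commute mult_left_mono norm_ge_zero)
qed

lemma cmod_cinner_le_numrad:
  assumes "bounded_linear (T::'a::complex_inner \<Rightarrow> 'a)" and "norm x = 1"
  shows "cmod (cinner (T x) x) \<le> numrad T"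
  unfolding numrad_def
proof (rule cSup_upper)
  show "cmod (cinner (T x) x) \<in> {cmod (cinner (T x) x) |x. norm x = 1}"
    using assms(2) by blast
  show "bdd_above {cmod (cinner (T x) x) |x. norm x = 1}"
  proof (rule bdd_aboveI)
    fix s assume "s \<in> {cmod (cinner (T x) x) |x. norm x = 1}"
    then obtain y where "norm y = 1" "s = cmod (cinner (T y) y)" by blast
    then show "s \<le> onorm T"
      using cmod_cinner_le_norm_mult[of "T y" y] onorm[OF assms(1), of y] by simp
  qed
qed

lemma cmod_cinner_le_numrad_norm:
  assumes "bounded_linear (T::'a::complex_inner \<Rightarrow> 'a)"
  shows "cmod (cinner (T x) x) \<le> numrad T * (norm x)\<^sup>2"
proof (cases "x = 0")
  case True
  then show ?thesis using bounded_linear.linear[OF assms] linear_0 by fastforce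
next
  case False
  define u where "u = (1 / norm x) *\<^sub>R x"
  have "norm u = 1" and "x = norm x *\<^sub>R u"
    using False by (simp_all add: u_def)
  then have "cinner (T x) x = (norm x)\<^sup>2 * cinner (T u) u"
    by (metis linear_scale[OF bounded_linear.linear[OF assms]] cinner_scaleR_left cinner_scaleR_right
        mult.assoc of_real_mult power2_eq_square)
  then have "cmod (cinner (T x) x) = (norm x)\<^sup>2 * cmod (cinner (T u) u)"
    by (simp add: norm_mult norm_power)
  also have "\<dots> \<le> (norm x)\<^sup>2 * numrad T"
    using cmod_cinner_le_numrad[OF assms \<open>norm u = 1\<close>] by (simp add: mult_left_mono)
  finally show ?thesis by (simp add: mult.commute)
qed

lemma numrad_nonneg:
  assumes "bounded_linear (T::'a::complex_inner \<Rightarrow> 'a)" and "\<exists>x::'a. x \<noteq> 0"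
  shows "0 \<le> numrad T"
proof -
  obtain x :: 'a where "x \<noteq> 0" using assms(2) by blast
  then have "norm ((1 / norm x) *\<^sub>R x) = 1" by simp
  from cmod_cinner_le_numrad[OF assms(1) this] show ?thesis
    by (meson norm_ge_zero order_trans)
qed

lemma alphaop_le:
  "norm x = 1 \<Longrightarrow> alphaop f \<le> (norm (f x))\<^sup>2"
  unfolding alphaop_def by (rule cInf_lower) (auto intro: bdd_belowI[of _ 0])

lemma alphaop_nonneg:
  assumes "\<exists>x::'a::complex_inner. x \<noteq> 0"
  shows "0 \<le> alphaop (f::'a \<Rightarrow> 'a)"
proof -
  obtain x :: 'a where "x \<noteq> 0" using assms by blast
  then have "norm ((1 / norm x) *\<^sub>R x) = 1" by simp
  then have "{(norm (f x))\<^sup>2 |x. norm x = 1} \<noteq> {}" by blast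
  then show ?thesis
    unfolding alphaop_def by (rule cInf_greatest) auto
qed

lemma selfadjoint_Re_cinner_le:
  fixes S :: "'a::complex_inner \<Rightarrow> 'a"
  assumes "linear S" and "is_adjoint S S"
    and form: "\<And>x. \<bar>Re (cinner (S x) x)\<bar> \<le> w * (norm x)\<^sup>2"
  shows "4 * Re (cinner (S x) y) \<le> 2 * w * ((norm x)\<^sup>2 + (norm y)\<^sup>2)"
proof -
  have "Re (cinner (S y) x) = Re (cinner (S x) y)"
    using assms(2) Re_cinner_commute[of y "S x"] by (simp add: is_adjoint_def)
  then have "4 * Re (cinner (S x) y)
      = Re (cinner (S (x + y)) (x + y)) - Re (cinner (S (x - y)) (x - y))"
    by (simp add: linear_add[OF assms(1)] linear_diff[OF assms(1)]
        cinner_add_left cinner_add_right cinner_diff_left cinner_diff_right)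
  also have "\<dots> \<le> w * (norm (x + y))\<^sup>2 + w * (norm (x - y))\<^sup>2"
    using form[of "x + y"] form[of "x - y"] by linarith
  also have "\<dots> = 2 * w * ((norm x)\<^sup>2 + (norm y)\<^sup>2)"
    by (simp add: power2_norm_add power2_norm_diff algebra_simps)
  finally show ?thesis .
qed

lemma selfadjoint_norm_le:
  fixes S :: "'a::complex_inner \<Rightarrow> 'a"
  assumes "linear S" and "is_adjoint S S"
    and form: "\<And>x. \<bar>Re (cinner (S x) x)\<bar> \<le> w * (norm x)\<^sup>2"
  shows "norm (S x) \<le> w * norm x"
proof (cases "S x = 0")
  case True
  have "0 \<le> w * (norm x)\<^sup>2" using form[of x] by linarith
  then have "0 \<le> w * norm x" by (cases "x = 0") (auto simp: zero_le_mult_iff)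
  with True show ?thesis by simp
next
  case False
  then have "x \<noteq> 0" using linear_0[OF assms(1)] by auto
  \<comment> \<open>polarize against the vector of length \<open>\<parallel>x\<parallel>\<close> in the direction of \<open>S x\<close>\<close>
  define y where "y = (norm x / norm (S x)) *\<^sub>R S x"
  have "norm y = norm x" using False by (simp add: y_def)
  have "Re (cinner (S x) y) = norm x * norm (S x)"
    using False by (simp add: y_def cinner_scaleR_right cinner_self_eq_norm power2_eq_square)
  then have "4 * (norm x * norm (S x)) \<le> 2 * w * (2 * (norm x)\<^sup>2)"
    using selfadjoint_Re_cinner_le[OF assms, of x y] \<open>norm y = norm x\<close> by simp
  then have "norm x * norm (S x) \<le> norm x * (w * norm x)"
    by (simp add: power2_eq_square algebra_simps)
  then show ?thesis using \<open>x \<noteq> 0\<close> by simp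
qed

lemma linear_scaleC: "linear f \<Longrightarrow> linear (\<lambda>x. c *\<^sub>C (f x::'a::complex_inner))"
  by (rule linearI) (simp_all add: linear_add linear_scale scaleC_add_right scaleC_scaleR_commute)

lemma linear_re_part: "linear T \<Longrightarrow> linear Tadj \<Longrightarrow> linear (re_part T Tadj)"
  unfolding re_part_def by (intro linear_scaleC linear_compose_add)

lemma linear_im_part: "linear T \<Longrightarrow> linear Tadj \<Longrightarrow> linear (im_part T Tadj)"
  unfolding im_part_def by (intro linear_scaleC linear_compose_sub)

lemma re_part_selfadjoint:
  assumes "is_adjoint Tadj (T::'a::complex_inner \<Rightarrow> 'a)"
  shows "is_adjoint (re_part T Tadj) (re_part T Tadj)"
  using assms is_adjoint_commute[OF assms]
  by (simp add: is_adjoint_def re_part_def cinner_scaleC_left cinner_scaleC_right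
      cinner_add_left cinner_add_right add.commute)

lemma im_part_selfadjoint:
  assumes "is_adjoint Tadj (T::'a::complex_inner \<Rightarrow> 'a)"
  shows "is_adjoint (im_part T Tadj) (im_part T Tadj)"
proof -
  have "cnj (1 / (2 * \<i>)) = - (1 / (2 * \<i>))" by (simp add: complex_eq_iff)
  with assms is_adjoint_commute[OF assms] show ?thesis
    by (simp add: is_adjoint_def im_part_def cinner_scaleC_left cinner_scaleC_right
        cinner_diff_left cinner_diff_right algebra_simps)
qed

lemma cinner_adjoint_self:
  "is_adjoint Tadj T \<Longrightarrow> cinner (Tadj x) x = cnj (cinner (T x) (x::'a::complex_inner))"
  unfolding is_adjoint_def by (metis cinner_commute)

lemma Re_cinner_re_part:
  assumes "is_adjoint Tadj (T::'a::complex_inner \<Rightarrow> 'a)"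
  shows "Re (cinner (re_part T Tadj x) x) = Re (cinner (T x) x)"
  using cinner_adjoint_self[OF assms, of x]
  by (simp add: re_part_def cinner_scaleC_left cinner_add_left)

lemma Re_cinner_im_part:
  assumes "is_adjoint Tadj (T::'a::complex_inner \<Rightarrow> 'a)"
  shows "Re (cinner (im_part T Tadj x) x) = Im (cinner (T x) x)"
  using cinner_adjoint_self[OF assms, of x]
  by (simp add: im_part_def cinner_scaleC_left cinner_diff_left complex_eq_iff)

lemma power2_norm_add_power2_norm_adjoint:
  "(norm (T x))\<^sup>2 + (norm (Tadj x))\<^sup>2
     = 2 * ((norm (re_part T Tadj x))\<^sup>2 + (norm (im_part T Tadj x))\<^sup>2)"
  for x :: "'a::complex_inner"
proof -
  have re: "norm (re_part T Tadj x) = norm (T x + Tadj x) / 2"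
    and im: "norm (im_part T Tadj x) = norm (T x - Tadj x) / 2"
    by (simp_all add: re_part_def im_part_def norm_scaleC norm_divide norm_mult)
  show ?thesis
    unfolding re im power_divide power2_norm_add power2_norm_diff by (simp add: field_simps)
qed

lemma norm_re_part_le_numrad:
  assumes "bounded_linear (T::'a::complex_inner \<Rightarrow> 'a)" and "is_adjoint Tadj T"
  shows "norm (re_part T Tadj x) \<le> numrad T * norm x"
proof (rule selfadjoint_norm_le)
  show "linear (re_part T Tadj)"
    using assms by (intro linear_re_part bounded_linear.linear is_adjoint_imp_linear)
  show "is_adjoint (re_part T Tadj) (re_part T Tadj)"
    using assms(2) by (rule re_part_selfadjoint)
  show "\<bar>Re (cinner (re_part T Tadj y) y)\<bar> \<le> numrad T * (norm y)\<^sup>2" for y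
    using Re_cinner_re_part[OF assms(2)] abs_Re_le_cmod cmod_cinner_le_numrad_norm[OF assms(1)]
    by (metis order_trans)
qed

lemma norm_im_part_le_numrad:
  assumes "bounded_linear (T::'a::complex_inner \<Rightarrow> 'a)" and "is_adjoint Tadj T"
  shows "norm (im_part T Tadj x) \<le> numrad T * norm x"
proof (rule selfadjoint_norm_le)
  show "linear (im_part T Tadj)"
    using assms by (intro linear_im_part bounded_linear.linear is_adjoint_imp_linear)
  show "is_adjoint (im_part T Tadj) (im_part T Tadj)"
    using assms(2) by (rule im_part_selfadjoint)
  show "\<bar>Re (cinner (im_part T Tadj y) y)\<bar> \<le> numrad T * (norm y)\<^sup>2" for y
    using Re_cinner_im_part[OF assms(2)] abs_Im_le_cmod cmod_cinner_le_numrad_norm[OF assms(1)]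
    by (metis order_trans)
qed

lemma bounded_linear_of_norm_le:
  "linear f \<Longrightarrow> (\<And>x. norm (f x) \<le> c * norm x) \<Longrightarrow> bounded_linear f"
  by (intro bounded_linear_intro[where K=c]) (simp_all add: linear_add linear_scale mult.commute)

lemma
  assumes "bounded_linear (T::'a::complex_inner \<Rightarrow> 'a)" and "is_adjoint Tadj T"
  shows bounded_linear_re_part: "bounded_linear (re_part T Tadj)"
    and bounded_linear_im_part: "bounded_linear (im_part T Tadj)"
proof -
  have "linear T" "linear Tadj"
    using assms by (auto intro: bounded_linear.linear is_adjoint_imp_linear)
  then show "bounded_linear (re_part T Tadj)" "bounded_linear (im_part T Tadj)"
    using norm_re_part_le_numrad[OF assms] norm_im_part_le_numrad[OF assms]
    by (auto intro: bounded_linear_of_norm_le linear_re_part linear_im_part)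
qed

lemma
  assumes "bounded_linear (T::'a::complex_inner \<Rightarrow> 'a)" and "is_adjoint Tadj T"
    and "\<exists>x::'a. x \<noteq> 0"
  shows onorm_re_part_le_numrad: "onorm (re_part T Tadj) \<le> numrad T"
    and onorm_im_part_le_numrad: "onorm (im_part T Tadj) \<le> numrad T"
  using numrad_nonneg[OF assms(1,3)] norm_re_part_le_numrad[OF assms(1,2)]
    norm_im_part_le_numrad[OF assms(1,2)] by (auto intro: onorm_bound)

lemma Dop_le_numrad:
  assumes "bounded_linear (T::'a::complex_inner \<Rightarrow> 'a)" and "is_adjoint Tadj T"
    and "\<exists>x::'a. x \<noteq> 0"
  shows "Dop T Tadj \<le> 2 * (numrad T)\<^sup>2"
proof -
  have "(onorm (re_part T Tadj))\<^sup>2 \<le> (numrad T)\<^sup>2"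
    using onorm_re_part_le_numrad[OF assms] onorm_pos_le[OF bounded_linear_re_part[OF assms(1,2)]]
    by (rule power_mono)
  then show ?thesis by (simp add: Dop_def)
qed

lemma power2_norm_add_power2_norm_adjoint_le:
  assumes "bounded_linear (T::'a::complex_inner \<Rightarrow> 'a)" and "is_adjoint Tadj T"
    and "norm x = 1"
  shows "(norm (T x))\<^sup>2 + (norm (Tadj x))\<^sup>2 \<le> 2 * (numrad T)\<^sup>2 + Dop T Tadj"
proof -
  let ?T1 = "re_part T Tadj" and ?T2 = "im_part T Tadj"
  have nontrivial: "\<exists>x::'a. x \<noteq> 0" using assms(3) by (metis norm_zero zero_neq_one)
  have bl: "bounded_linear ?T1" "bounded_linear ?T2"
    using assms(1,2) by (rule bounded_linear_re_part, rule bounded_linear_im_part)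
  have "norm (?T1 x) \<le> onorm ?T1" "norm (?T2 x) \<le> onorm ?T2"
    using onorm[OF bl(1), of x] onorm[OF bl(2), of x] assms(3) by simp_all
  then have "(norm (?T1 x))\<^sup>2 \<le> (onorm ?T1)\<^sup>2" "(norm (?T2 x))\<^sup>2 \<le> (onorm ?T2)\<^sup>2"
    using power_mono norm_ge_zero by blast+
  moreover have "(onorm ?T1)\<^sup>2 \<le> (numrad T)\<^sup>2" "(onorm ?T2)\<^sup>2 \<le> (numrad T)\<^sup>2"
    using onorm_re_part_le_numrad[OF assms(1,2) nontrivial] onorm_pos_le[OF bl(1)]
      onorm_im_part_le_numrad[OF assms(1,2) nontrivial] onorm_pos_le[OF bl(2)]
    using power_mono by blast+
  ultimately have "(norm (?T1 x))\<^sup>2 + (norm (?T2 x))\<^sup>2 \<le> (numrad T)\<^sup>2 + m"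
    if "m = min ((onorm ?T1)\<^sup>2) ((onorm ?T2)\<^sup>2)" for m
    using that by (auto simp: min_def)
  from this[OF refl] show ?thesis
    unfolding Dop_def power2_norm_add_power2_norm_adjoint[of T x Tadj] by simp
qed

lemma power2_norm_le_of_adjoint:
  assumes "is_adjoint Tadj (T::'a::complex_inner \<Rightarrow> 'a)"
    and adjoint_bound: "\<And>u. norm u = 1 \<Longrightarrow> (norm (Tadj u))\<^sup>2 \<le> c"
    and "norm x = 1"
  shows "(norm (T x))\<^sup>2 \<le> c"
proof -
  have "0 \<le> c" using adjoint_bound[OF assms(3)] by (meson order_trans zero_le_power2)
  have "norm (Tadj y) \<le> sqrt c * norm y" for y
    using is_adjoint_imp_linear[OF assms(1)]
    by (rule linear_norm_le_of_unit) (use adjoint_bound real_le_rsqrt in blast)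
  have "(norm (T x))\<^sup>2 = Re (cinner x (Tadj (T x)))"
    using assms(1) by (simp add: power2_norm_eq_cinner is_adjoint_def)
  also have "\<dots> \<le> norm x * norm (Tadj (T x))" by (rule Re_cinner_le_norm_mult)
  also have "\<dots> \<le> sqrt c * norm (T x)"
    using \<open>norm (Tadj (T x)) \<le> sqrt c * norm (T x)\<close> assms(3) by simp
  finally have "norm (T x) \<le> sqrt c"
    using \<open>0 \<le> c\<close> by (cases "T x = 0") (simp_all add: power2_eq_square)
  then show ?thesis
    using \<open>0 \<le> c\<close> by (metis norm_ge_zero power_mono real_sqrt_pow2)
qed

lemma power2_norm_le_numrad_alphaop_Dop:
  assumes T: "bounded_linear (T::'a::complex_inner \<Rightarrow> 'a)" and adj: "is_adjoint Tadj T"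
    and "norm x = 1"
  shows "(norm (T x))\<^sup>2 \<le> 2 * (numrad T)\<^sup>2 - max (alphaop T) (alphaop Tadj) + Dop T Tadj"
proof -
  note sum_le = power2_norm_add_power2_norm_adjoint_le[OF T adj]
  have "(norm (T x))\<^sup>2 \<le> 2 * (numrad T)\<^sup>2 + Dop T Tadj - alphaop T"
    using adj _ assms(3)
  proof (rule power2_norm_le_of_adjoint)
    show "(norm (Tadj u))\<^sup>2 \<le> 2 * (numrad T)\<^sup>2 + Dop T Tadj - alphaop T" if "norm u = 1" for u
      using sum_le[OF that] alphaop_le[OF that, of T] by linarith
  qed
  moreover have "(norm (T x))\<^sup>2 \<le> 2 * (numrad T)\<^sup>2 + Dop T Tadj - alphaop Tadj"
    using sum_le[OF assms(3)] alphaop_le[OF assms(3), of Tadj] by linarith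
  ultimately show ?thesis by (auto simp: max_def)
qed

theorem proposition2p2:
  fixes T Tadj :: "'a::chilbert_space \<Rightarrow> 'a"
  assumes nontrivial: "\<exists>x::'a. x \<noteq> 0"
    and bounded: "bounded_clinear_op T"
    and adj: "is_adjoint Tadj T"
  shows "0 \<le> 2 * (numrad T)\<^sup>2 - max (alphaop T) (alphaop Tadj) + Dop T Tadj
       \<and> onorm T \<le> sqrt (2 * (numrad T)\<^sup>2 - max (alphaop T) (alphaop Tadj) + Dop T Tadj)
       \<and> sqrt (2 * (numrad T)\<^sup>2 - max (alphaop T) (alphaop Tadj) + Dop T Tadj) \<le> 2 * numrad T"
proof -
  have T: "bounded_linear T"
    using bounded by (rule bounded_clinear_op_imp_bounded_linear)
  let ?B = "2 * (numrad T)\<^sup>2 - max (alphaop T) (alphaop Tadj) + Dop T Tadj"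
  note unit_le = power2_norm_le_numrad_alphaop_Dop[OF T adj]
  obtain u :: 'a where "norm u = 1"
    using nontrivial by (metis norm_sgn)
  then have B_nonneg: "0 \<le> ?B"
    using unit_le by (meson order_trans zero_le_power2)
  have "onorm T \<le> sqrt ?B"
    using real_sqrt_ge_zero[OF B_nonneg] linear_norm_le_of_unit[OF bounded_linear.linear[OF T]]
    by (rule onorm_bound) (use unit_le real_le_rsqrt in blast)
  moreover have "sqrt ?B \<le> 2 * numrad T"
    using Dop_le_numrad[OF T adj nontrivial] alphaop_nonneg[OF nontrivial, of T]
      numrad_nonneg[OF T nontrivial]
    by (intro real_le_lsqrt) (auto simp: power2_eq_square max_def)
  ultimately show ?thesis using B_nonneg by blast
qed

end
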